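(* For every positive integer $m$, the stopping distance of $H(m-1,m)$ is $2^m$.
   Context: All matrices are binary. The matrices $G(r,m)$, $0\le r\le m$, are defined recursively by $G(m,m) = I_{2^m}$, $G(0,m) = (11\cdots1)$ (length $2^m$), and for $0<r<m$, $G(r,m) = \begin{pmatrix} G(r,m-1) & G(r,m-1) \\ \mathbf{0} & G(r-1,m-1)\end{pmatrix}$. Define $H(0,m) = (11\cdots1)$ (length $2^m$), $H(m-1,m) = G(m-1,m)$, $H(m,m) = I_{2^m}$ for all $m\ge0$. For a matrix $H$, the stopping distance $s(H)$ is the largest integer such that for every set of $s(H)-1$ or fewer columns of $H$, the projection of $H$ onto those columns contains at least one row of Hamming weight exactly one. *)

theory Defs
  imports Main
begin

text \<open>Binary matrices are lists of rows; each row is a bool list (True = 1).\<close>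

definition idm :: "nat \<Rightarrow> bool list list" where
  "idm n = map (\<lambda>i. map (\<lambda>j. i = j) [0..<n]) [0..<n]"

function G :: "nat \<Rightarrow> nat \<Rightarrow> bool list list" where
  "G r m = (if r = m then idm (2^m)
            else if r = 0 then [replicate (2^m) True]
            else if r < m then
              map (\<lambda>row. row @ row) (G r (m-1)) @
              map (\<lambda>row. replicate (2^(m-1)) False @ row) (G (r-1) (m-1))
            else [])"
  by auto
termination by (relation "measure snd") auto

text \<open>H is only specified in the paper for r = 0, r = m-1 and r = m.\<close>
definition H :: "nat \<Rightarrow> nat \<Rightarrow> bool list list" where
  "H r m = (if r = m then idm (2^m)
            else if r = m - 1 then G (m-1) m
            else if r = 0 then [replicate (2^m) True]
            else undefined)"

definition ncols :: "bool list list \<Rightarrow> nat" where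
  "ncols M = length (hd M)"

definition stop_ok :: "bool list list \<Rightarrow> nat \<Rightarrow> bool" where
  "stop_ok M s = (\<forall>S. S \<subseteq> {..<ncols M} \<and> S \<noteq> {} \<and> card S < s \<longrightarrow>
      (\<exists>row \<in> set M. card {j \<in> S. row ! j} = 1))"

definition stopping_distance :: "bool list list \<Rightarrow> nat" where
  "stopping_distance M = (GREATEST s. stop_ok M s)"

end

theory Submission
  imports Defs
begin

text \<open>Every row of \<open>G(r,m)\<close> has weight at least \<open>2^(m-r)\<close>, so for \<open>r = m-1\<close> no row
  has weight one on the full column set and the stopping distance is at most \<open>2^m\<close>.
  Conversely \<open>G(m-1,m)\<close> has the block form \<open>[I I; 0 G(m-2,m-1)]\<close>. For a proper nonempty
  column set \<open>S\<close>, either \<open>S\<close> contains exactly one of the columns \<open>i\<close>, \<open>i + 2^(m-1)\<close> for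
  some \<open>i\<close>, and the \<open>i\<close>-th row of \<open>[I I]\<close> meets \<open>S\<close> once, or \<open>S\<close> is a doubled copy of a
  proper nonempty subset of the right half, to which induction applies via the block
  \<open>[0 G(m-2,m-1)]\<close>.\<close>

declare G.simps [simp del]

lemma G_diag: "G m m = idm (2^m)"
  by (subst G.simps) simp

lemma G_0: "0 < m \<Longrightarrow> G 0 m = [replicate (2^m) True]"
  by (subst G.simps) simp

lemma G_rec:
  "0 < r \<Longrightarrow> r < m \<Longrightarrow> G r m =
     map (\<lambda>row. row @ row) (G r (m-1)) @
     map (\<lambda>row. replicate (2^(m-1)) False @ row) (G (r-1) (m-1))"
  by (subst G.simps) simp

lemma G_Suc_Suc_diag:
  "G (Suc k) (Suc (Suc k)) = map (\<lambda>row. row @ row) (idm (2^Suc k)) @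
     map (\<lambda>row. replicate (2^Suc k) False @ row) (G k (Suc k))"
  by (simp add: G_rec G_diag)

lemma idm_rowE:
  assumes "row \<in> set (idm n)"
  obtains i where "i < n" "row = map (\<lambda>j. i = j) [0..<n]"
  using assms unfolding idm_def by auto

lemma count_list_unit_row: "i < n \<Longrightarrow> count_list (map (\<lambda>j. i = j) [0..<n]) True = 1"
proof -
  assume "i < n"
  then have "[0..<n] = [0..<i] @ i # [Suc i..<n]"
    by (metis le_add_diff_inverse less_imp_le_nat upt_add_eq_append upt_conv_Cons zero_le)
  then show ?thesis by simp
qed

lemma count_list_replicate_same: "count_list (replicate n x) x = n"
  by (induction n) auto

lemma count_list_True_eq_card: "count_list xs True = card {j \<in> {..<length xs}. xs ! j}"
  by (simp add: count_list_eq_length_filter length_filter_conv_card Collect_conj_eq lessThan_def)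

lemma length_G_row: "r \<le> m \<Longrightarrow> row \<in> set (G r m) \<Longrightarrow> length row = 2^m"
proof (induction m arbitrary: r row)
  case 0
  then show ?case by (auto simp: G_diag elim: idm_rowE)
next
  case (Suc m)
  consider "r = Suc m" | "r = 0" | "0 < r" "r < Suc m"
    using Suc.prems(1) by linarith
  then show ?case
  proof cases
    case 1
    then show ?thesis using Suc.prems(2) by (auto simp: G_diag elim: idm_rowE)
  next
    case 2
    then show ?thesis using Suc.prems(2) by (simp add: G_0)
  next
    case 3
    then show ?thesis using Suc.prems(2) Suc.IH[of r] Suc.IH[of "r-1"] by (auto simp: G_rec)
  qed
qed

lemma G_nonempty: "r \<le> m \<Longrightarrow> G r m \<noteq> []"
proof (induction m arbitrary: r)
  case 0
  then show ?case by (simp add: G_diag idm_def)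
next
  case (Suc m)
  then show ?case by (cases "r = Suc m \<or> r = 0") (auto simp: G_diag G_0 G_rec idm_def)
qed

lemma ncols_G: "r \<le> m \<Longrightarrow> ncols (G r m) = 2^m"
  using G_nonempty length_G_row unfolding ncols_def by simp

lemma count_list_G_row: "r \<le> m \<Longrightarrow> row \<in> set (G r m) \<Longrightarrow> 2^(m-r) \<le> count_list row True"
proof (induction m arbitrary: r row)
  case 0
  then show ?case by (auto simp: G_diag count_list_unit_row elim: idm_rowE)
next
  case (Suc m)
  consider "r = Suc m" | "r = 0" | "0 < r" "r < Suc m"
    using Suc.prems(1) by linarith
  then show ?case
  proof cases
    case 1
    then show ?thesis using Suc.prems(2) by (auto simp: G_diag count_list_unit_row elim: idm_rowE)
  next
    case 2
    then show ?thesis using Suc.prems(2) by (simp add: G_0 count_list_replicate_same)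
  next
    case 3
    then consider g where "g \<in> set (G r m)" "row = g @ g"
      | g where "g \<in> set (G (r-1) m)" "row = replicate (2^m) False @ g"
      using Suc.prems(2) by (auto simp: G_rec)
    then show ?thesis
    proof cases
      case 1
      with \<open>r < Suc m\<close> Suc.IH[of r g] show ?thesis
        by (simp add: Suc_diff_le)
    next
      case 2
      with 3 Suc.IH[of "r-1" g] show ?thesis by simp
    qed
  qed
qed

lemma card_filter_shifted_row:
  "card {j \<in> S. (replicate n False @ g) ! j} = card {j. j + n \<in> S \<and> g ! j}"
proof -
  have "{j \<in> S. (replicate n False @ g) ! j} = (\<lambda>j. j + n) ` {j. j + n \<in> S \<and> g ! j}"
    by (auto simp: nth_append image_iff) (metis le_add_diff_inverse2 not_less)
  then show ?thesis by (simp add: card_image inj_on_def)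
qed

lemma card_filter_doubled_unit_row:
  assumes "S \<subseteq> {..<2 * n}" "i < n" "(i \<in> S) \<noteq> (i + n \<in> S)"
  shows "card {j \<in> S. (map (\<lambda>j. i = j) [0..<n] @ map (\<lambda>j. i = j) [0..<n]) ! j} = 1"
proof -
  have "{j \<in> S. (map (\<lambda>j. i = j) [0..<n] @ map (\<lambda>j. i = j) [0..<n]) ! j} =
      (if i \<in> S then {i} else {i + n})"
    using assms by (auto simp: nth_append)
  then show ?thesis by simp
qed

lemma G_Suc_has_weight_one_row:
  "S \<subset> {..<2^Suc k} \<Longrightarrow> S \<noteq> {} \<Longrightarrow> \<exists>row \<in> set (G k (Suc k)). card {j \<in> S. row ! j} = 1"
proof (induction k arbitrary: S)
  case 0
  have "{j \<in> S. replicate 2 True ! j} = S"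
    using "0.prems"(1) by auto
  moreover have "card S < 2"
    using psubset_card_mono[OF _ "0.prems"(1)] by simp
  moreover have "card S \<noteq> 0"
    using "0.prems" finite_subset[of S "{..<2}"] by auto
  ultimately show ?case by (simp add: G_0)
next
  case (Suc k)
  define n :: nat where "n = 2^Suc k"
  have S_psub: "S \<subset> {..<2 * n}" using Suc.prems(1) by (simp add: n_def)
  then have S_sub: "S \<subseteq> {..<2 * n}" by blast
  show ?case
  proof (cases "\<exists>i<n. (i \<in> S) \<noteq> (i + n \<in> S)")
    case True
    then obtain i where i: "i < n" "(i \<in> S) \<noteq> (i + n \<in> S)" by blast
    then have "map (\<lambda>j. i = j) [0..<n] @ map (\<lambda>j. i = j) [0..<n] \<in> set (G (Suc k) (Suc (Suc k)))"
      by (auto simp: G_Suc_Suc_diag idm_def n_def)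
    with card_filter_doubled_unit_row[OF S_sub i] show ?thesis by blast
  next
    case False
    then have periodic: "\<And>i. i < n \<Longrightarrow> i + n \<in> S \<longleftrightarrow> i \<in> S" by blast
    define R where "R = {j. j + n \<in> S}"
    have R_eq: "R = S \<inter> {..<n}"
      using periodic S_sub unfolding R_def by fastforce
    have shift_in_R: "j - n \<in> R" if "j \<in> S" "n \<le> j" for j
      using that unfolding R_def by simp
    have "R \<noteq> {}"
    proof -
      obtain j where "j \<in> S" using Suc.prems(2) by blast
      then show ?thesis using R_eq shift_in_R[of j] by (cases "j < n") auto
    qed
    moreover have "R \<noteq> {..<n}"
    proof
      assume R_full: "R = {..<n}"
      have "j \<in> S" if "j < 2 * n" for j
      proof (cases "j < n")
        case True
        then show ?thesis using R_full R_eq by auto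
      next
        case False
        then have "j - n \<in> R" using R_full that by auto
        then show ?thesis using False unfolding R_def by simp
      qed
      with S_psub show False by auto
    qed
    ultimately obtain g where g: "g \<in> set (G k (Suc k))" "card {j \<in> R. g ! j} = 1"
      using Suc.IH[of R] R_eq by (auto simp: n_def)
    have "replicate n False @ g \<in> set (G (Suc k) (Suc (Suc k)))"
      using g(1) by (simp add: G_Suc_Suc_diag n_def)
    moreover have "card {j \<in> S. (replicate n False @ g) ! j} = 1"
      using g(2) card_filter_shifted_row[of S n g] unfolding R_def by simp
    ultimately show ?thesis by blast
  qed
qed

lemma stop_ok_G_Suc: "stop_ok (G k (Suc k)) (2^Suc k)"
  unfolding stop_ok_def
proof (intro allI impI)
  fix S :: "nat set"
  assume S: "S \<subseteq> {..<ncols (G k (Suc k))} \<and> S \<noteq> {} \<and> card S < 2^Suc k"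
  then have "S \<subset> {..<2^Suc k}" by (auto simp: ncols_G)
  with S show "\<exists>row \<in> set (G k (Suc k)). card {j \<in> S. row ! j} = 1"
    using G_Suc_has_weight_one_row by blast
qed

lemma stop_ok_mono: "stop_ok M s \<Longrightarrow> t \<le> s \<Longrightarrow> stop_ok M t"
  unfolding stop_ok_def by auto

lemma stopping_distance_eqI:
  assumes "stop_ok M s" "\<not> stop_ok M (Suc s)"
  shows "stopping_distance M = s"
  unfolding stopping_distance_def
proof (rule Greatest_equality)
  show "stop_ok M s" by fact
  show "t \<le> s" if "stop_ok M t" for t
    using that assms(2) stop_ok_mono[of M t "Suc s"] by (meson not_less_eq_eq)
qed

lemma not_stop_ok_Suc_ncols:
  assumes "M \<noteq> []" and rows: "\<And>row. row \<in> set M \<Longrightarrow> length row = ncols M \<and> 2 \<le> count_list row True"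
  shows "\<not> stop_ok M (Suc (ncols M))"
proof
  assume stop: "stop_ok M (Suc (ncols M))"
  have "2 \<le> ncols M"
    using rows[of "hd M"] \<open>M \<noteq> []\<close> count_le_length[of "hd M" True] by simp
  then have "{..<ncols M} \<noteq> {}" by (simp add: lessThan_empty_iff)
  then obtain row where "row \<in> set M" "card {j \<in> {..<ncols M}. row ! j} = 1"
    using stop[unfolded stop_ok_def, rule_format, of "{..<ncols M}"] by auto
  then show False using rows[of row] by (auto simp: count_list_True_eq_card)
qed

lemma not_stop_ok_G_Suc: "\<not> stop_ok (G k (Suc k)) (Suc (2^Suc k))"
proof -
  have "\<not> stop_ok (G k (Suc k)) (Suc (ncols (G k (Suc k))))"
  proof (rule not_stop_ok_Suc_ncols)
    show "G k (Suc k) \<noteq> []" by (simp add: G_nonempty)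
    fix row assume "row \<in> set (G k (Suc k))"
    then show "length row = ncols (G k (Suc k)) \<and> 2 \<le> count_list row True"
      using length_G_row[of k "Suc k" row] count_list_G_row[of k "Suc k" row] by (simp add: ncols_G)
  qed
  then show ?thesis by (simp add: ncols_G)
qed

theorem lemma11:
  fixes m :: nat
  assumes "m \<ge> 1"
  shows "stopping_distance (H (m-1) m) = 2^m"
proof -
  obtain k where m: "m = Suc k" using assms by (cases m) auto
  have "H k (Suc k) = G k (Suc k)" by (simp add: H_def)
  moreover have "stopping_distance (G k (Suc k)) = 2^Suc k"
    using stop_ok_G_Suc not_stop_ok_G_Suc by (rule stopping_distance_eqI)
  ultimately show ?thesis by (simp add: m)
qed

end
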